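(* Let $(X,d)$ be a compact metric space with $\dim X=0$ and $f\colon X\to X$ an equicontinuous map. Then for every $\epsilon>0$ there is $\delta>0$ such that for every sequence $(x_i)_{i\ge0}$ in $X$ with $d(f(x_i),x_{i+1})\le\delta$ for all $i\ge0$, we have $d(x_i,f^i(x_0))\le\epsilon$ for every $i\ge0$.
   Context: $f$ is equicontinuous if for every $\epsilon>0$ there is $\delta>0$ such that $d(x,y)\le\delta$ implies $\sup_{n\ge0}d(f^n(x),f^n(y))\le\epsilon$. *)

theory Defs
  imports "HOL-Analysis.Analysis"
begin

definition equicontinuous_map :: "'a::metric_space set \<Rightarrow> ('a \<Rightarrow> 'a) \<Rightarrow> bool" where
  "equicontinuous_map X f \<longleftrightarrow>
     (\<forall>e>0. \<exists>d>0. \<forall>x\<in>X. \<forall>y\<in>X. dist x y \<le> d \<longrightarrow> (\<forall>n. dist ((f ^^ n) x) ((f ^^ n) y) \<le> e))"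

text \<open>Zero (small inductive) dimension of a subspace X: X is nonempty and every point
  of X has arbitrarily small neighbourhoods (relative to X) whose boundary in X is empty,
  i.e. that are open and closed in X.\<close>
definition dim_zero :: "'a::metric_space set \<Rightarrow> bool" where
  "dim_zero X \<longleftrightarrow> X \<noteq> {} \<and>
     (\<forall>x\<in>X. \<forall>U. openin (top_of_set X) U \<and> x \<in> U \<longrightarrow>
        (\<exists>V. openin (top_of_set X) V \<and> closedin (top_of_set X) V \<and> x \<in> V \<and> V \<subseteq> U))"

end

theory Submission
  imports Defs
begin

text \<open>Cover the zero-dimensional compact space X by finitely many clopen sets of diameter
  less than \<open>\<epsilon>\<close>. Clopen sets of a compact space are at positive distance from their
  complements, so points closer than some \<open>l > 0\<close> lie in the same members of the cover;
  by equicontinuity, points closer than some \<open>\<delta>\<close> keep this property along their whole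
  orbits. Hence a \<open>\<delta>\<close>-pseudo-orbit visits, at every time i, the same members of the cover
  as the true orbit of its starting point, so the two are \<open>\<epsilon>\<close>-close.\<close>

lemma separate_compact_closed_metric:
  fixes S T :: "'a::metric_space set"
  assumes "compact S" "closed T" "S \<inter> T = {}"
  shows "\<exists>\<delta>>0. \<forall>x\<in>S. \<forall>y\<in>T. \<delta> \<le> dist x y"
proof (cases "S = {} \<or> T = {}")
  case True
  then show ?thesis by (auto intro: exI[of _ 1])
next
  case False
  have "continuous_on S (\<lambda>x. infdist x T)"
    by (intro continuous_at_imp_continuous_on ballI continuous_infdist continuous_ident)
  then obtain x0 where x0: "x0 \<in> S" "\<forall>x\<in>S. infdist x0 T \<le> infdist x T"
    using continuous_attains_inf[OF \<open>compact S\<close>] False by blast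
  have "infdist x0 T > 0"
    using x0(1) assms(2,3) False in_closed_iff_infdist_zero[of T x0]
    by (auto simp: less_le infdist_nonneg)
  moreover have "\<forall>x\<in>S. \<forall>y\<in>T. infdist x0 T \<le> dist x y"
    using x0(2) by (auto intro: order_trans infdist_le)
  ultimately show ?thesis by blast
qed

lemma clopen_in_compact_uniformly_separated:
  fixes X V :: "'a::metric_space set"
  assumes "compact X" "openin (top_of_set X) V" "closedin (top_of_set X) V"
  shows "\<exists>l>0. \<forall>x\<in>X. \<forall>y\<in>X. dist x y < l \<longrightarrow> (x \<in> V \<longleftrightarrow> y \<in> V)"
proof -
  have "compact V"
    using closedin_compact[OF assms(1,3)] .
  moreover have "compact (X - V)"
    using closedin_compact[OF assms(1)] assms(2) by (simp add: closedin_diff)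
  ultimately obtain l where "l > 0" and l: "\<forall>x\<in>V. \<forall>y\<in>X - V. l \<le> dist x y"
    using separate_compact_closed_metric[of V "X - V"] compact_imp_closed by blast
  have "x \<in> V \<longleftrightarrow> y \<in> V" if "x \<in> X" "y \<in> X" "dist x y < l" for x y
    using l[rule_format, of x y] l[rule_format, of y x] that by (auto simp: dist_commute)
  with \<open>l > 0\<close> show ?thesis by blast
qed

lemma finite_clopen_family_uniformly_separated:
  fixes X :: "'a::metric_space set"
  assumes "compact X" "finite F"
    and "\<forall>V\<in>F. openin (top_of_set X) V \<and> closedin (top_of_set X) V"
  shows "\<exists>l>0. \<forall>x\<in>X. \<forall>y\<in>X. dist x y < l \<longrightarrow> (\<forall>V\<in>F. x \<in> V \<longleftrightarrow> y \<in> V)"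
proof -
  obtain l where l: "\<And>V. V \<in> F \<Longrightarrow> l V > 0 \<and>
      (\<forall>x\<in>X. \<forall>y\<in>X. dist x y < l V \<longrightarrow> (x \<in> V \<longleftrightarrow> y \<in> V))"
    using clopen_in_compact_uniformly_separated[OF assms(1)] assms(3) by (metis (no_types))
  define m where "m = Min (insert 1 (l ` F))"
  have "m > 0"
    unfolding m_def using assms(2) l by auto
  moreover have "m \<le> l V" if "V \<in> F" for V
    unfolding m_def using assms(2) that by simp
  ultimately show ?thesis
    using l by (meson order_less_le_trans)
qed

lemma dim_zero_small_clopen_nbhd:
  fixes X :: "'a::metric_space set"
  assumes "dim_zero X" "z \<in> X" "r > 0"
  shows "\<exists>W. openin (top_of_set X) W \<and> closedin (top_of_set X) W \<and> z \<in> W \<and> W \<subseteq> ball z r"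
proof -
  have clopen_nbhds: "\<forall>z\<in>X. \<forall>U. openin (top_of_set X) U \<and> z \<in> U \<longrightarrow>
      (\<exists>W. openin (top_of_set X) W \<and> closedin (top_of_set X) W \<and> z \<in> W \<and> W \<subseteq> U)"
    using assms(1) unfolding dim_zero_def by (rule conjunct2)
  have "openin (top_of_set X) (X \<inter> ball z r) \<and> z \<in> X \<inter> ball z r"
    using assms(2,3) by (auto simp: openin_open_Int)
  then obtain W where "openin (top_of_set X) W" "closedin (top_of_set X) W" "z \<in> W"
      "W \<subseteq> X \<inter> ball z r"
    using clopen_nbhds assms(2) by meson
  then show ?thesis by blast
qed

lemma dim_zero_compact_small_clopen_cover:
  fixes X :: "'a::metric_space set"
  assumes "compact X" "dim_zero X" "\<epsilon> > 0"
  obtains F where "finite F" "\<forall>V\<in>F. openin (top_of_set X) V \<and> closedin (top_of_set X) V"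
    "X \<subseteq> \<Union>F" "\<forall>V\<in>F. \<forall>a\<in>V. \<forall>b\<in>V. dist a b < \<epsilon>"
proof -
  have "\<epsilon>/2 > 0"
    using assms(3) by simp
  then have "\<forall>z\<in>X. \<exists>W. openin (top_of_set X) W \<and> closedin (top_of_set X) W \<and> z \<in> W \<and> W \<subseteq> ball z (\<epsilon>/2)"
    using dim_zero_small_clopen_nbhd[OF assms(2)] by blast
  then obtain V where V: "\<And>z. z \<in> X \<Longrightarrow> openin (top_of_set X) (V z) \<and>
      closedin (top_of_set X) (V z) \<and> z \<in> V z \<and> V z \<subseteq> ball z (\<epsilon>/2)"
    by metis
  have "\<forall>C. (\<forall>W\<in>C. openin (top_of_set X) W) \<and> X \<subseteq> \<Union>C \<longrightarrow> (\<exists>F\<subseteq>C. finite F \<and> X \<subseteq> \<Union>F)"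
    using assms(1) by (simp only: compact_eq_openin_cover)
  moreover have "X \<subseteq> \<Union>(V ` X)" "\<forall>W\<in>V ` X. openin (top_of_set X) W"
    using V by auto
  ultimately have "\<exists>F\<subseteq>V ` X. finite F \<and> X \<subseteq> \<Union>F"
    by blast
  then obtain F where F: "F \<subseteq> V ` X" "finite F" "X \<subseteq> \<Union>F"
    by blast
  have clopen: "\<forall>W\<in>F. openin (top_of_set X) W \<and> closedin (top_of_set X) W"
    using F(1) V by blast
  have small: "\<forall>W\<in>F. \<forall>a\<in>W. \<forall>b\<in>W. dist a b < \<epsilon>"
  proof (intro ballI)
    fix W a b assume W: "W \<in> F" "a \<in> W" "b \<in> W"
    obtain z where "z \<in> X" "W = V z"
      using F(1) W(1) by blast
    then have "W \<subseteq> ball z (\<epsilon>/2)"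
      using V by simp
    then have "a \<in> ball z (\<epsilon>/2)" "b \<in> ball z (\<epsilon>/2)"
      using W(2,3) by auto
    then show "dist a b < \<epsilon>"
      by (simp add: dist_triangle_half_r)
  qed
  show ?thesis
    using that[OF F(2) clopen F(3) small] .
qed

definition same_itinerary :: "'a set set \<Rightarrow> ('a \<Rightarrow> 'a) \<Rightarrow> 'a \<Rightarrow> 'a \<Rightarrow> bool" where
  "same_itinerary F f a b \<longleftrightarrow> (\<forall>n. \<forall>V\<in>F. (f ^^ n) a \<in> V \<longleftrightarrow> (f ^^ n) b \<in> V)"

lemma same_itineraryD:
  assumes "same_itinerary F f a b" "V \<in> F"
  shows "a \<in> V \<longleftrightarrow> b \<in> V"
  using assms unfolding same_itinerary_def by (metis funpow_0)

lemma pseudo_orbit_same_itinerary: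
  assumes "\<And>i. same_itinerary F f (x (Suc i)) (f (x i))"
  shows "same_itinerary F f (x i) ((f ^^ i) (x 0))"
proof (induction i)
  case 0
  show ?case by (simp add: same_itinerary_def)
next
  case (Suc i)
  have "same_itinerary F f (f (x i)) ((f ^^ Suc i) (x 0))"
    unfolding same_itinerary_def
  proof (intro allI)
    fix n
    have "(f ^^ n) (f (x i)) = (f ^^ Suc n) (x i)"
      "(f ^^ n) ((f ^^ Suc i) (x 0)) = (f ^^ Suc n) ((f ^^ i) (x 0))"
      by (simp_all add: funpow_swap1)
    then show "\<forall>V\<in>F. (f ^^ n) (f (x i)) \<in> V \<longleftrightarrow> (f ^^ n) ((f ^^ Suc i) (x 0)) \<in> V"
      using Suc.IH unfolding same_itinerary_def by presburger
  qed
  with assms[of i] show ?case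
    unfolding same_itinerary_def by blast
qed

lemma funpow_in_invariant_set:
  assumes "f ` X \<subseteq> X" "a \<in> X"
  shows "(f ^^ n) a \<in> X"
  using assms by (induction n) auto

lemma equicontinuous_map_same_itinerary:
  fixes X :: "'a::metric_space set"
  assumes "compact X" "f ` X \<subseteq> X" "equicontinuous_map X f" "finite F"
    and "\<forall>V\<in>F. openin (top_of_set X) V \<and> closedin (top_of_set X) V"
  shows "\<exists>\<delta>>0. \<forall>a\<in>X. \<forall>b\<in>X. dist a b \<le> \<delta> \<longrightarrow> same_itinerary F f a b"
proof -
  obtain l where "l > 0"
    and l: "\<forall>x\<in>X. \<forall>y\<in>X. dist x y < l \<longrightarrow> (\<forall>V\<in>F. x \<in> V \<longleftrightarrow> y \<in> V)"
    using finite_clopen_family_uniformly_separated[OF assms(1,4,5)] by blast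
  obtain \<delta> where "\<delta> > 0"
    and \<delta>: "\<forall>a\<in>X. \<forall>b\<in>X. dist a b \<le> \<delta> \<longrightarrow> (\<forall>n. dist ((f ^^ n) a) ((f ^^ n) b) \<le> l/2)"
    using assms(3) \<open>l > 0\<close> unfolding equicontinuous_map_def by (meson half_gt_zero)
  have "same_itinerary F f a b" if "a \<in> X" "b \<in> X" "dist a b \<le> \<delta>" for a b
    unfolding same_itinerary_def
  proof (intro allI)
    fix n
    have "dist ((f ^^ n) a) ((f ^^ n) b) \<le> l/2"
      using \<delta> that by blast
    then have "dist ((f ^^ n) a) ((f ^^ n) b) < l"
      using \<open>l > 0\<close> by linarith
    then show "\<forall>V\<in>F. (f ^^ n) a \<in> V \<longleftrightarrow> (f ^^ n) b \<in> V"
      using l funpow_in_invariant_set[OF assms(2)] that by blast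
  qed
  with \<open>\<delta> > 0\<close> show ?thesis by blast
qed

theorem lemma3p2:
  fixes X :: "'a::metric_space set" and f :: "'a \<Rightarrow> 'a"
  assumes "compact X" and "dim_zero X"
    and "f ` X \<subseteq> X"
    and "equicontinuous_map X f"
  shows "\<forall>e>0. \<exists>d>0. \<forall>x::nat \<Rightarrow> 'a. (\<forall>i. x i \<in> X) \<longrightarrow>
           (\<forall>i. dist (f (x i)) (x (Suc i)) \<le> d) \<longrightarrow>
           (\<forall>i. dist (x i) ((f ^^ i) (x 0)) \<le> e)"
proof (intro allI impI)
  fix e :: real assume "e > 0"
  obtain F where F: "finite F" "\<forall>V\<in>F. openin (top_of_set X) V \<and> closedin (top_of_set X) V"
    "X \<subseteq> \<Union>F" "\<forall>V\<in>F. \<forall>a\<in>V. \<forall>b\<in>V. dist a b < e"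
    using dim_zero_compact_small_clopen_cover[OF assms(1,2) \<open>e > 0\<close>] by blast
  obtain d where "d > 0" and d: "\<forall>a\<in>X. \<forall>b\<in>X. dist a b \<le> d \<longrightarrow> same_itinerary F f a b"
    using equicontinuous_map_same_itinerary[OF assms(1,3,4) F(1,2)] by blast
  show "\<exists>d>0. \<forall>x::nat \<Rightarrow> 'a. (\<forall>i. x i \<in> X) \<longrightarrow>
           (\<forall>i. dist (f (x i)) (x (Suc i)) \<le> d) \<longrightarrow>
           (\<forall>i. dist (x i) ((f ^^ i) (x 0)) \<le> e)"
  proof (intro exI[of _ d] conjI allI impI)
    fix x :: "nat \<Rightarrow> 'a" and i
    assume "\<forall>i. x i \<in> X" and "\<forall>i. dist (f (x i)) (x (Suc i)) \<le> d"
    then have "x (Suc j) \<in> X" "f (x j) \<in> X" "dist (x (Suc j)) (f (x j)) \<le> d" for j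
      using assms(3) by (auto simp: dist_commute)
    then have "same_itinerary F f (x (Suc j)) (f (x j))" for j
      using d by blast
    then have itinerary: "same_itinerary F f (x i) ((f ^^ i) (x 0))"
      by (rule pseudo_orbit_same_itinerary)
    obtain V where "V \<in> F" "x i \<in> V"
      using F(3) \<open>\<forall>i. x i \<in> X\<close> by blast
    then have "(f ^^ i) (x 0) \<in> V"
      using same_itineraryD[OF itinerary] by blast
    with \<open>V \<in> F\<close> \<open>x i \<in> V\<close> show "dist (x i) ((f ^^ i) (x 0)) \<le> e"
      using F(4) by (meson less_imp_le)
  qed (fact \<open>d > 0\<close>)
qed

end
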